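(* Let $\mathcal{X}$ be a measurable space, $K\ge1$, and let classifiers be measurable maps $\mathcal{X}\to[K]$. Let $\mathcal{B}$ assign to each $x$ a set $\mathcal{B}(x)\subseteq\mathcal{X}$ and let $\mathcal{N}(V)=\{x:\exists x'\in V,\ \mathcal{B}(x)\cap\mathcal{B}(x')\neq\emptyset\}$. Let $Q$ be a probability measure on $\mathcal{X}$ satisfying the $c$-expansion property for a non-increasing $c:[0,1]\to(0,\infty)$, i.e. $Q(\mathcal{N}(S))\ge c(Q(S))Q(S)$ for every measurable $S$. Let $F,H,G_{pl}$ be classifiers, $\gamma_H=c(Q(\{x:G_{pl}(x)\neq H(x)\}))$, and assume $\gamma_H>1$. Let $\mathcal{S}_{\mathcal{B}}(F)=\{x:F(x)=F(x')\ \forall x'\in\mathcal{B}(x)\}$ (similarly for $H$), with complements $\mathcal{S}_{\mathcal{B}}^c(\cdot)$; let $\mathcal{M}(G_{pl})=\{x:G_{pl}(x)\neq H(x)\}$ and $\mathcal{M}_{pl}(F)=\{x:F(x)\neq G_{pl}(x)\}$. Let $q=Q(\mathcal{M}_{pl}(F)\cup\mathcal{S}_{\mathcal{B}}^c(F)\cup\mathcal{S}_{\mathcal{B}}^c(H))/(\gamma_H-1)$ and $\mathcal{N}_3=\{x\in\mathcal{S}_{\mathcal{B}}(F)\cap\mathcal{S}_{\mathcal{B}}(H):F(x)\neq G_{pl}(x),\ G_{pl}(x)=H(x)\}$. Then $$Q(\mathcal{N}_3)\le q+Q\big(\mathcal{S}_{\mathcal{B}}^c(F)\cup\mathcal{S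}_{\mathcal{B}}^c(H)\big)+Q(\mathcal{M}_{pl}(F))-Q(\mathcal{M}(G_{pl})).$$
   Context: All sets are assumed measurable. *)

theory Defs
  imports "HOL-Probability.Probability"
begin

definition nbhd :: "'a set \<Rightarrow> ('a \<Rightarrow> 'a set) \<Rightarrow> 'a set \<Rightarrow> 'a set" where
  "nbhd X B V = {x \<in> X. \<exists>x'\<in>V. B x \<inter> B x' \<noteq> {}}"

definition robust_set :: "'a set \<Rightarrow> ('a \<Rightarrow> 'a set) \<Rightarrow> ('a \<Rightarrow> nat) \<Rightarrow> 'a set" where
  "robust_set X B F = {x \<in> X. \<forall>x'\<in>B x. F x = F x'}"

definition expansion :: "'a measure \<Rightarrow> ('a \<Rightarrow> 'a set) \<Rightarrow> (real \<Rightarrow> real) \<Rightarrow> bool" where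
  "expansion Q B c \<longleftrightarrow>
     (\<forall>S \<in> sets Q. measure Q (nbhd (space Q) B S) \<ge> c (measure Q S) * measure Q S)"

end

theory Submission
  imports Defs
begin

text \<open>
  Call a point good if it is robust for F and H and F agrees with Gpl there. Two good points whose
  B-sets meet have the same F-label, hence the same Gpl-label, and the same H-label. So the set S
  of good points with Gpl \<noteq> H has its neighbourhood inside S and the bad points; as
  Q(S) \<le> Q(Gpl \<noteq> H) and c is non-increasing, expansion gives \<gamma>H Q(S) \<le> Q(S) + Q(bad), i.e.
  Q(S) \<le> q. Finally {Gpl \<noteq> H} - {F \<noteq> Gpl} is covered by S and the non-robust points, while N3
  is a subset of {F \<noteq> Gpl} disjoint from {Gpl \<noteq> H}.
\<close>

lemma sets_Collect_count_space_pair: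
  assumes F: "F \<in> M \<rightarrow>\<^sub>M count_space A" and G: "G \<in> M \<rightarrow>\<^sub>M count_space A"
    and "countable A"
  shows "{x \<in> space M. P (F x) (G x)} \<in> sets M"
proof -
  have "(\<lambda>x. P i (G x)) \<in> M \<rightarrow>\<^sub>M count_space UNIV" for i
    using G by (rule measurable_compose) simp
  then have "(\<lambda>x. P (F x) (G x)) \<in> M \<rightarrow>\<^sub>M count_space UNIV"
    by (rule measurable_compose_countable'[where f="\<lambda>i x. P i (G x)", OF _ F \<open>countable A\<close>])
  then show ?thesis by (rule predE)
qed

lemma robust_label_mismatch_propagates:
  assumes x: "x \<in> robust_set X B F \<inter> robust_set X B H" "F x = G x"
    and x': "x' \<in> robust_set X B F \<inter> robust_set X B H" "F x' = G x'"
    and meet: "B x \<inter> B x' \<noteq> {}"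
    and mismatch: "G x' \<noteq> H x'"
  shows "G x \<noteq> H x"
proof -
  obtain z where z: "z \<in> B x" "z \<in> B x'" using meet by blast
  have "F x = F z" "H x = H z" using x(1) z(1) unfolding robust_set_def by auto
  moreover have "F x' = F z" "H x' = H z" using x'(1) z(2) unfolding robust_set_def by auto
  ultimately have "G x = G x'" "H x = H x'" using x(2) x'(2) by simp_all
  then show ?thesis using mismatch by simp
qed

lemma nbhd_robust_mismatch_subset:
  fixes X :: "'a set" and B :: "'a \<Rightarrow> 'a set" and F H G :: "'a \<Rightarrow> nat"
  defines "R \<equiv> robust_set X B F \<inter> robust_set X B H \<inter> {x. F x = G x}"
  shows "nbhd X B {x \<in> R. G x \<noteq> H x} \<subseteq> {x \<in> R. G x \<noteq> H x} \<union> (X - R)"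
proof
  fix x assume "x \<in> nbhd X B {x \<in> R. G x \<noteq> H x}"
  then obtain x' where x': "x' \<in> R" "G x' \<noteq> H x'" "B x \<inter> B x' \<noteq> {}" and "x \<in> X"
    unfolding nbhd_def by blast
  moreover have "G x \<noteq> H x" if "x \<in> R"
    using that x' unfolding R_def by (intro robust_label_mismatch_propagates[of x X B F H G x']) auto
  ultimately show "x \<in> {x \<in> R. G x \<noteq> H x} \<union> (X - R)" by blast
qed

lemma (in finite_measure) measure_le_of_expansion:
  assumes "expansion M B c" and sets: "S \<in> sets M" "U \<in> sets M" "nbhd (space M) B S \<in> sets M"
    and nbhd: "nbhd (space M) B S \<subseteq> S \<union> U"
    and \<gamma>: "\<gamma> \<le> c (measure M S)" "1 < \<gamma>"
  shows "measure M S \<le> measure M U / (\<gamma> - 1)"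
proof -
  have "\<gamma> * measure M S \<le> c (measure M S) * measure M S"
    using \<gamma>(1) by (intro mult_right_mono) auto
  also have "\<dots> \<le> measure M (nbhd (space M) B S)"
    using assms(1) sets(1) unfolding expansion_def by blast
  also have "\<dots> \<le> measure M (S \<union> U)"
    using sets nbhd by (intro finite_measure_mono) auto
  also have "\<dots> \<le> measure M S + measure M U"
    using sets by (intro measure_subadditive) auto
  finally show ?thesis using \<gamma>(2) by (simp add: field_simps)
qed

lemma (in finite_measure) measure_le_of_disjoint_subset:
  assumes sets: "N \<in> sets M" "A \<in> sets M" "E \<in> sets M" and "N \<subseteq> A" "N \<inter> E = {}"
  shows "measure M N \<le> measure M A - measure M E + measure M (E - A)"
proof -
  have "measure M N + measure M (E \<inter> A) = measure M (N \<union> (E \<inter> A))"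
    using assms by (intro finite_measure_Union[symmetric]) auto
  also have "\<dots> \<le> measure M A"
    using assms by (intro finite_measure_mono) auto
  finally show ?thesis using finite_measure_Diff'[OF sets(3,2)] by simp
qed

theorem mainTheorem4:
  fixes Q :: "'a measure" and B :: "'a \<Rightarrow> 'a set" and c :: "real \<Rightarrow> real"
    and K :: nat and F H Gpl :: "'a \<Rightarrow> nat"
  assumes K: "K \<ge> 1"
    and prob: "prob_space Q"
    and F_meas: "F \<in> Q \<rightarrow>\<^sub>M count_space {1..K}"
    and H_meas: "H \<in> Q \<rightarrow>\<^sub>M count_space {1..K}"
    and G_meas: "Gpl \<in> Q \<rightarrow>\<^sub>M count_space {1..K}"
    and B_sub: "\<And>x. x \<in> space Q \<Longrightarrow> B x \<subseteq> space Q"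
    and nbhd_meas: "\<And>S. S \<in> sets Q \<Longrightarrow> nbhd (space Q) B S \<in> sets Q"
    and robF_meas: "robust_set (space Q) B F \<in> sets Q"
    and robH_meas: "robust_set (space Q) B H \<in> sets Q"
    and c_pos: "\<And>t. 0 \<le> t \<Longrightarrow> t \<le> 1 \<Longrightarrow> c t > 0"
    and c_noninc: "\<And>s t. 0 \<le> s \<Longrightarrow> s \<le> t \<Longrightarrow> t \<le> 1 \<Longrightarrow> c t \<le> c s"
    and exp: "expansion Q B c"
    and gamma_gt: "c (measure Q {x \<in> space Q. Gpl x \<noteq> H x}) > 1"
  shows
    "let \<gamma>H = c (measure Q {x \<in> space Q. Gpl x \<noteq> H x});
         SF = robust_set (space Q) B F;
         SH = robust_set (space Q) B H;
         SFc = space Q - SF;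
         SHc = space Q - SH;
         MG = {x \<in> space Q. Gpl x \<noteq> H x};
         MplF = {x \<in> space Q. F x \<noteq> Gpl x};
         q = measure Q (MplF \<union> SFc \<union> SHc) / (\<gamma>H - 1);
         N3 = {x \<in> SF \<inter> SH. F x \<noteq> Gpl x \<and> Gpl x = H x}
     in measure Q N3 \<le> q + measure Q (SFc \<union> SHc) + measure Q MplF - measure Q MG"
proof -
  interpret prob_space Q by (rule prob)
  define SF where "SF = robust_set (space Q) B F"
  define SH where "SH = robust_set (space Q) B H"
  define NR where "NR = (space Q - SF) \<union> (space Q - SH)"
  define MG where "MG = {x \<in> space Q. Gpl x \<noteq> H x}"
  define MplF where "MplF = {x \<in> space Q. F x \<noteq> Gpl x}"
  define N3 where "N3 = {x \<in> SF \<inter> SH. F x \<noteq> Gpl x \<and> Gpl x = H x}"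
  define R where "R = SF \<inter> SH \<inter> {x. F x = Gpl x}"
  define S where "S = {x \<in> R. Gpl x \<noteq> H x}"
  have "SF \<subseteq> space Q" "SH \<subseteq> space Q" unfolding SF_def SH_def robust_set_def by auto
  then have R_compl: "space Q - R = MplF \<union> NR" and "S \<subseteq> MG" "MG - MplF \<subseteq> S \<union> NR"
    and N3: "N3 \<subseteq> MplF" "N3 \<inter> MG = {}"
    and set_eqs: "S = (SF \<inter> SH - MplF) \<inter> MG" "N3 = SF \<inter> SH \<inter> MplF - MG"
    unfolding R_def S_def NR_def MG_def MplF_def N3_def by auto
  have MG: "MG \<in> sets Q" unfolding MG_def
    by (rule sets_Collect_count_space_pair[OF G_meas H_meas]) simp
  have MplF: "MplF \<in> sets Q" unfolding MplF_def
    by (rule sets_Collect_count_space_pair[OF F_meas G_meas]) simp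
  have sets: "MG \<in> sets Q" "MplF \<in> sets Q" "NR \<in> sets Q" "N3 \<in> sets Q" "S \<in> sets Q"
    unfolding set_eqs NR_def SF_def SH_def
    by (intro MG MplF robF_meas robH_meas sets.Un sets.Diff sets.Int sets.top)+
  have "prob S \<le> prob (MplF \<union> NR) / (c (prob MG) - 1)"
  proof (rule measure_le_of_expansion[OF exp])
    show "nbhd (space Q) B S \<subseteq> S \<union> (MplF \<union> NR)"
      using nbhd_robust_mismatch_subset[of "space Q" B F H Gpl] R_compl
      unfolding S_def R_def SF_def SH_def by simp
    show "c (prob MG) \<le> c (prob S)"
      using \<open>S \<subseteq> MG\<close> sets by (intro c_noninc finite_measure_mono) auto
  qed (use sets nbhd_meas gamma_gt MG_def in auto)
  moreover have "prob (MG - MplF) \<le> prob S + prob NR"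
    using \<open>MG - MplF \<subseteq> S \<union> NR\<close> sets
    by (intro order_trans[OF finite_measure_mono measure_subadditive]) auto
  moreover have "prob N3 \<le> prob MplF - prob MG + prob (MG - MplF)"
    using N3 sets by (intro measure_le_of_disjoint_subset) auto
  ultimately have "prob N3 \<le> prob (MplF \<union> NR) / (c (prob MG) - 1) + prob NR + prob MplF - prob MG"
    by linarith
  then show ?thesis
    unfolding Let_def SF_def SH_def MG_def MplF_def N3_def NR_def Un_assoc .
qed

end
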